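(* Let $F$ be a field and let $M$ be a root-closed Puiseux monoid. Then $F[M]$ is a U-UFD: whenever $g_1\cdots g_k=h_1\cdots h_\ell$ with all $g_i,h_j$ irreducible in $F[M]$, one has $k=\ell$ and there is a permutation $\sigma$ of $\{1,\dots,k\}$ such that $g_i$ and $h_{\sigma(i)}$ are associates for every $i$.
   Context: A Puiseux monoid is an additive submonoid of $(\mathbb{Q}_{\ge 0},+)$; $F[M]$ is its semigroup algebra over $F$ (finite formal sums $\sum_{s\in M} f(s)X^s$ with $X^sX^t=X^{s+t}$), an integral domain with units $F^\times$. $\mathsf{gp}(M)=\{x-y\mid x,y\in M\}$; $x\in\mathsf{gp}(M)$ is a root element if $nx\in M$ for some $n\in\mathbb{N}$; $M$ is root-closed if all root elements lie in $M$. An integral domain is an unrestricted unique factorization domain (U-UFD) if every element that admits a factorization into irreducibles has a unique such factorization up to order and associates. *)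

theory Defs
  imports Complex_Main "HOL-Library.Poly_Mapping" "HOL-Combinatorics.Permutations"
begin

definition puiseux_monoid :: "rat set \<Rightarrow> bool" where
  "puiseux_monoid M \<longleftrightarrow> M \<subseteq> {q. 0 \<le> q} \<and> 0 \<in> M \<and> (\<forall>x\<in>M. \<forall>y\<in>M. x + y \<in> M)"

definition gp :: "rat set \<Rightarrow> rat set" where
  "gp M = {x - y | x y. x \<in> M \<and> y \<in> M}"

definition root_closed :: "rat set \<Rightarrow> bool" where
  "root_closed M \<longleftrightarrow> (\<forall>x\<in>gp M. (\<exists>n::nat. n \<ge> 1 \<and> of_nat n * x \<in> M) \<longrightarrow> x \<in> M)"

text \<open>Semigroup algebra F[M]: finitely supported functions with support in M,
  multiplication is convolution (the multiplication of poly_mapping), so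
  the monomial X^s is Poly_Mapping.single s 1.\<close>
definition sg_alg :: "rat set \<Rightarrow> (rat \<Rightarrow>\<^sub>0 'a::field) set" where
  "sg_alg M = {p. Poly_Mapping.keys p \<subseteq> M}"

definition sg_unit :: "rat set \<Rightarrow> (rat \<Rightarrow>\<^sub>0 'a::field) \<Rightarrow> bool" where
  "sg_unit M u \<longleftrightarrow> u \<in> sg_alg M \<and> (\<exists>v\<in>sg_alg M. u * v = 1)"

definition sg_irreducible :: "rat set \<Rightarrow> (rat \<Rightarrow>\<^sub>0 'a::field) \<Rightarrow> bool" where
  "sg_irreducible M a \<longleftrightarrow> a \<in> sg_alg M \<and> a \<noteq> 0 \<and> \<not> sg_unit M a \<and>
     (\<forall>b\<in>sg_alg M. \<forall>c\<in>sg_alg M. a = b * c \<longrightarrow> sg_unit M b \<or> sg_unit M c)"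

definition sg_associated :: "rat set \<Rightarrow> (rat \<Rightarrow>\<^sub>0 'a::field) \<Rightarrow> (rat \<Rightarrow>\<^sub>0 'a) \<Rightarrow> bool" where
  "sg_associated M a b \<longleftrightarrow> a \<in> sg_alg M \<and> b \<in> sg_alg M \<and> (\<exists>u. sg_unit M u \<and> b = u * a)"

end

theory Submission
  imports Defs "HOL-Computational_Algebra.Polynomial_Factorial"
begin

text \<open>For \<open>e, s \<in> M\<close> the group \<open>\<int>e + \<int>s\<close> is cyclic, and root-closedness puts its positive
  generator into \<open>M\<close>. Hence finitely many elements of \<open>F[M]\<close> always lie in a common subring
  \<open>F[X\<^sup>e] \<cong> F[x]\<close> with \<open>e \<in> M\<close>. Applied to a unit and its inverse this shows that the units of
  \<open>F[M]\<close> are the nonzero constants; so irreducibles of \<open>F[M]\<close> are irreducible in \<open>F[x]\<close>, and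
  the two factorizations are factorizations in the UFD \<open>F[x]\<close>.\<close>

section \<open>Root-closed Puiseux monoids\<close>

definition multiples :: "rat \<Rightarrow> rat set" where
  "multiples d = range (\<lambda>n. of_nat n * d)"

lemma multiples_trans: "e \<in> multiples d \<Longrightarrow> multiples e \<subseteq> multiples d"
  by (auto simp: multiples_def) (metis mult.assoc of_nat_mult rangeI)

lemma puiseux_monoid_of_nat_mult: "puiseux_monoid M \<Longrightarrow> m \<in> M \<Longrightarrow> of_nat n * m \<in> M"
  by (induction n) (auto simp: puiseux_monoid_def distrib_right)

lemma puiseux_monoid_multiples: "puiseux_monoid M \<Longrightarrow> e \<in> M \<Longrightarrow> multiples e \<subseteq> M"
  by (auto simp: multiples_def puiseux_monoid_of_nat_mult)

lemma gp_add:
  assumes "puiseux_monoid M" "x \<in> gp M" "y \<in> gp M"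
  shows "x + y \<in> gp M"
proof -
  obtain a b c d where "x = a - b" "y = c - d" "a \<in> M" "b \<in> M" "c \<in> M" "d \<in> M"
    using assms(2,3) by (auto simp: gp_def)
  moreover have "x + y = (a + c) - (b + d)"
    using calculation by simp
  ultimately show ?thesis
    using assms(1) unfolding gp_def puiseux_monoid_def by blast
qed

lemma gp_of_int_mult:
  assumes "puiseux_monoid M" "m \<in> M"
  shows "of_int k * m \<in> gp M"
proof (cases "k \<ge> 0")
  case True
  then have "of_int k * m = of_nat (nat k) * m - 0"
    by simp
  then show ?thesis
    using assms puiseux_monoid_of_nat_mult unfolding gp_def puiseux_monoid_def by blast
next
  case False
  then have "of_int k * m = 0 - of_nat (nat (- k)) * m"
    by simp
  then show ?thesis
    using assms puiseux_monoid_of_nat_mult unfolding gp_def puiseux_monoid_def by blast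
qed

text \<open>If \<open>s / e = p / q\<close> in lowest terms, then \<open>e / q\<close> is an integer combination of \<open>s\<close>
  and \<open>e\<close> by Bezout, and \<open>q (e / q) = e \<in> M\<close>; root-closedness puts \<open>e / q\<close> into \<open>M\<close>.\<close>

lemma root_closed_common_divisor:
  assumes M: "puiseux_monoid M" "root_closed M" and "e \<in> M" "e > 0" "s \<in> M"
  shows "\<exists>d\<in>M. d > 0 \<and> e \<in> multiples d \<and> s \<in> multiples d"
proof -
  obtain p q where pq: "quotient_of (s / e) = (p, q)"
    by force
  have "q > 0" "s / e = of_int p / of_int q" "coprime p q"
    using pq quotient_of_denom_pos quotient_of_div quotient_of_coprime by blast+
  define d where "d = e / of_int q"
  have "d > 0"
    using \<open>e > 0\<close> \<open>q > 0\<close> by (simp add: d_def)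
  have e_eq: "e = of_int q * d" and s_eq: "s = of_int p * d"
    using \<open>e > 0\<close> \<open>q > 0\<close> \<open>s / e = _\<close> by (simp_all add: d_def field_simps)
  have "s \<ge> 0"
    using M \<open>s \<in> M\<close> by (auto simp: puiseux_monoid_def)
  then have "p \<ge> 0"
    using s_eq \<open>d > 0\<close> by (meson linorder_not_le mult_neg_pos not_less of_int_less_0_iff)
  obtain u v where "u * p + v * q = gcd p q"
    using bezout_int by blast
  with \<open>coprime p q\<close> have "d = of_int u * s + of_int v * e"
    by (simp add: e_eq s_eq algebra_simps flip: of_int_mult of_int_add ring_distribs)
  also have "\<dots> \<in> gp M"
    by (intro gp_add gp_of_int_mult assms)
  finally have "d \<in> gp M" .
  moreover have "of_nat (nat q) * d = e" "nat q \<ge> 1"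
    using e_eq \<open>q > 0\<close> by simp_all
  ultimately have "d \<in> M"
    using M(2) \<open>e \<in> M\<close> unfolding root_closed_def by metis
  moreover have "e = of_nat (nat q) * d" "s = of_nat (nat p) * d"
    using e_eq s_eq \<open>q > 0\<close> \<open>p \<ge> 0\<close> by simp_all
  then have "e \<in> multiples d" "s \<in> multiples d"
    unfolding multiples_def by blast+
  ultimately show ?thesis
    using \<open>d > 0\<close> by blast
qed

lemma root_closed_finite_subset_multiples:
  assumes M: "puiseux_monoid M" "root_closed M" and "m \<in> M" "m > 0"
    and "finite S" "S \<subseteq> M"
  shows "\<exists>e\<in>M. e > 0 \<and> S \<subseteq> multiples e"
  using \<open>finite S\<close> \<open>S \<subseteq> M\<close>
proof (induction S rule: finite_induct)
  case empty
  then show ?case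
    using \<open>m \<in> M\<close> \<open>m > 0\<close> by blast
next
  case (insert s S)
  then obtain e where "e \<in> M" "e > 0" "S \<subseteq> multiples e"
    by auto
  moreover have "s \<in> M"
    using insert.prems by simp
  ultimately obtain d where "d \<in> M" "d > 0" "e \<in> multiples d" "s \<in> multiples d"
    using root_closed_common_divisor[OF M] by blast
  then show ?case
    using multiples_trans \<open>S \<subseteq> multiples e\<close> by blast
qed

section \<open>Unique factorization in \<open>F[x]\<close>\<close>

definition monic_part :: "'a::field poly \<Rightarrow> 'a poly" where
  "monic_part p = smult (inverse (lead_coeff p)) p"

lemma lead_coeff_monic_part: "p \<noteq> 0 \<Longrightarrow> lead_coeff (monic_part p) = 1"
  by (simp add: monic_part_def)

lemma monic_part_mult: "monic_part (p * q) = monic_part p * monic_part q"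
  by (simp add: monic_part_def lead_coeff_mult mult.commute)

lemma monic_part_prod_list: "monic_part (prod_list ps) = prod_list (map monic_part ps)"
  by (induction ps) (simp_all add: monic_part_mult, simp add: monic_part_def)

lemma irreducible_monic_part:
  assumes "irreducible p"
  shows "irreducible (monic_part p)"
proof -
  have "is_unit [:inverse (lead_coeff p):]"
    using assms by (auto simp: is_unit_const_poly_iff dvd_field_iff irreducible_def)
  moreover have "monic_part p = [:inverse (lead_coeff p):] * p"
    by (simp add: monic_part_def)
  ultimately show ?thesis
    using assms by (simp only: irreducible_mult_unit_left)
qed

lemma monic_part_eq_imp_const_mult:
  assumes "p \<noteq> 0" "monic_part p = monic_part q"
  shows "\<exists>c. c \<noteq> 0 \<and> q = [:c:] * p"
proof -
  have "q \<noteq> 0"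
    using assms by (auto simp: monic_part_def)
  then have "q = smult (lead_coeff q) (monic_part q)"
    by (simp add: monic_part_def)
  also have "\<dots> = smult (lead_coeff q) (monic_part p)"
    using assms(2) by simp
  also have "\<dots> = [:lead_coeff q / lead_coeff p:] * p"
    by (simp add: monic_part_def divide_inverse)
  finally have "q = [:lead_coeff q / lead_coeff p:] * p" .
  moreover have "lead_coeff q / lead_coeff p \<noteq> 0"
    using assms(1) \<open>q \<noteq> 0\<close> by simp
  ultimately show ?thesis
    by blast
qed

lemma monic_irreducible_dvd_imp_eq:
  fixes p q :: "'a::field poly"
  assumes "irreducible p" "irreducible q" "lead_coeff p = 1" "lead_coeff q = 1" "p dvd q"
  shows "p = q"
proof -
  obtain k where k: "q = p * k"
    using assms(5) by (elim dvdE)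
  then have "is_unit k"
    using irreducibleD[OF assms(2) k] assms(1) by (auto simp: irreducible_def)
  then obtain c where c: "k = [:c:]"
    by (auto simp: is_unit_poly_iff)
  then have "lead_coeff q = c * lead_coeff p"
    using k by simp
  then have "c = 1"
    using assms(3,4) by simp
  then show ?thesis
    using k c by simp
qed

lemma monic_irreducible_factorization_unique:
  fixes A B :: "'a::field poly multiset"
  assumes "\<forall>p\<in>#A. irreducible p \<and> lead_coeff p = 1" "\<forall>p\<in>#B. irreducible p \<and> lead_coeff p = 1"
    and "prod_mset A = prod_mset B"
  shows "A = B"
  using assms
proof (induction A arbitrary: B)
  case empty
  show ?case
  proof (rule ccontr)
    assume "{#} \<noteq> B"
    then obtain q where "q \<in># B"
      by auto
    then have "is_unit q"
      using dvd_prod_mset[of q B] empty.prems(3) by simp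
    with \<open>q \<in># B\<close> empty.prems(2) show False
      by (auto dest: irreducible_not_unit)
  qed
next
  case (add p A)
  have "prime_elem p" "p \<noteq> 0"
    using add.prems(1) field_poly_irreducible_imp_prime by (auto simp: irreducible_def)
  moreover have "p dvd prod_mset B"
    by (simp flip: add.prems(3))
  ultimately obtain q where "q \<in># B" "p dvd q"
    by (elim prime_elem_dvd_prod_msetE)
  then have "p = q"
    using add.prems(1,2) by (intro monic_irreducible_dvd_imp_eq) auto
  with \<open>q \<in># B\<close> have B: "B = add_mset p (B - {#p#})"
    by simp
  have "p * prod_mset A = p * prod_mset (B - {#p#})"
    using add.prems(3) by (subst (asm) B) simp
  then have "prod_mset A = prod_mset (B - {#p#})"
    using \<open>p \<noteq> 0\<close> by simp
  then have "A = B - {#p#}"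
    using add.prems by (intro add.IH) (auto dest: in_diffD)
  then show ?case
    using B by simp
qed

lemma field_poly_factorization_unique:
  fixes gs hs :: "'a::field poly list"
  assumes "\<forall>g\<in>set gs. irreducible g" "\<forall>h\<in>set hs. irreducible h"
    and "prod_list gs = prod_list hs"
  shows "length gs = length hs \<and>
    (\<exists>\<sigma>. \<sigma> permutes {..<length gs} \<and> (\<forall>i<length gs. \<exists>c. c \<noteq> 0 \<and> hs ! \<sigma> i = [:c:] * gs ! i))"
proof -
  have monic_irreducible: "irreducible (monic_part p) \<and> lead_coeff (monic_part p) = 1"
    if "irreducible p" for p :: "'a poly"
    using that irreducible_monic_part lead_coeff_monic_part by (auto simp: irreducible_def)
  have "prod_mset (mset (map monic_part xs)) = monic_part (prod_list xs)" for xs :: "'a poly list"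
    by (simp only: prod_mset_prod_list monic_part_prod_list)
  then have "mset (map monic_part gs) = mset (map monic_part hs)"
    using assms monic_irreducible by (intro monic_irreducible_factorization_unique) auto
  then obtain \<sigma> where \<sigma>': "\<sigma> permutes {..<length (map monic_part hs)}"
    and perm: "permute_list \<sigma> (map monic_part hs) = map monic_part gs"
    by (rule mset_eq_permutation)
  have \<sigma>: "\<sigma> permutes {..<length hs}"
    using \<sigma>' by simp
  have len: "length gs = length hs"
    using arg_cong[OF perm, of length] by simp
  have "\<exists>c. c \<noteq> 0 \<and> hs ! \<sigma> i = [:c:] * gs ! i" if "i < length gs" for i
  proof (rule monic_part_eq_imp_const_mult)
    show "gs ! i \<noteq> 0"
      using assms(1) that by (auto simp: irreducible_def)
    have "monic_part (gs ! i) = permute_list \<sigma> (map monic_part hs) ! i"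
      using perm that by simp
    also have "\<dots> = monic_part (hs ! \<sigma> i)"
      using permute_list_nth[of \<sigma> "map monic_part hs" i] \<sigma> permutes_in_image[OF \<sigma>] that len
      by simp
    finally show "monic_part (gs ! i) = monic_part (hs ! \<sigma> i)" .
  qed
  with \<sigma> len show ?thesis
    by auto
qed

section \<open>Polynomials in \<open>X\<^sup>e\<close>\<close>

definition emb_poly :: "rat \<Rightarrow> 'a::field poly \<Rightarrow> (rat \<Rightarrow>\<^sub>0 'a)" where
  "emb_poly e p = (\<Sum>i\<le>degree p. Poly_Mapping.single (of_nat i * e) (coeff p i))"

lemma lookup_emb_poly_multiple:
  "e \<noteq> 0 \<Longrightarrow> Poly_Mapping.lookup (emb_poly e p) (of_nat j * e) = coeff p j"
  unfolding emb_poly_def lookup_sum lookup_single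
  by (simp add: when_def coeff_eq_0 sum.delta')

lemma lookup_emb_poly_not_multiple:
  "k \<notin> multiples e \<Longrightarrow> Poly_Mapping.lookup (emb_poly e p) k = 0"
  unfolding emb_poly_def lookup_sum lookup_single multiples_def
  by (intro sum.neutral) (auto simp: when_def)

lemma keys_emb_poly: "Poly_Mapping.keys (emb_poly e p) \<subseteq> multiples e"
  using lookup_emb_poly_not_multiple by (fastforce simp: in_keys_iff)

lemma emb_poly_eqI:
  assumes "e \<noteq> 0"
    and "\<And>k. k \<notin> multiples e \<Longrightarrow> Poly_Mapping.lookup f k = 0"
    and "\<And>j. Poly_Mapping.lookup f (of_nat j * e) = coeff p j"
  shows "emb_poly e p = f"
proof (rule poly_mapping_eqI)
  fix k
  show "Poly_Mapping.lookup (emb_poly e p) k = Poly_Mapping.lookup f k"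
  proof (cases "k \<in> multiples e")
    case True
    then obtain j where "k = of_nat j * e"
      by (auto simp: multiples_def)
    then show ?thesis
      using assms lookup_emb_poly_multiple by metis
  next
    case False
    then show ?thesis
      using assms lookup_emb_poly_not_multiple by metis
  qed
qed

lemma emb_poly_inj: "e \<noteq> 0 \<Longrightarrow> emb_poly e p = emb_poly e q \<Longrightarrow> p = q"
  by (rule poly_eqI) (metis lookup_emb_poly_multiple)

lemma emb_poly_0 [simp]: "emb_poly e 0 = 0"
  by (simp add: emb_poly_def)

lemma emb_poly_add: "e \<noteq> 0 \<Longrightarrow> emb_poly e (p + q) = emb_poly e p + emb_poly e q"
  by (rule emb_poly_eqI) (auto simp: lookup_add lookup_emb_poly_multiple lookup_emb_poly_not_multiple)

lemma emb_poly_sum: "e \<noteq> 0 \<Longrightarrow> emb_poly e (sum f A) = (\<Sum>x\<in>A. emb_poly e (f x))"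
  by (induction A rule: infinite_finite_induct) (auto simp: emb_poly_add)

lemma emb_poly_monom:
  "e \<noteq> 0 \<Longrightarrow> emb_poly e (monom c i) = Poly_Mapping.single (of_nat i * e) c"
  by (rule emb_poly_eqI) (auto simp: lookup_single when_def multiples_def)

lemma emb_poly_const: "e \<noteq> 0 \<Longrightarrow> emb_poly e [:c:] = Poly_Mapping.single 0 c"
  using emb_poly_monom[of e c 0] by (simp add: monom_0)

lemma emb_poly_1: "e \<noteq> 0 \<Longrightarrow> emb_poly e 1 = 1"
  using emb_poly_const[of e 1] by (simp add: one_pCons)

lemma emb_poly_mult:
  assumes "e \<noteq> 0"
  shows "emb_poly e (p * q) = emb_poly e p * emb_poly e q"
proof -
  have "emb_poly e (p * q) =
      emb_poly e ((\<Sum>i\<le>degree p. monom (coeff p i) i) * (\<Sum>j\<le>degree q. monom (coeff q j) j))"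
    by (simp add: poly_as_sum_of_monoms)
  also have "\<dots> = (\<Sum>i\<le>degree p. \<Sum>j\<le>degree q.
      Poly_Mapping.single (of_nat i * e) (coeff p i) * Poly_Mapping.single (of_nat j * e) (coeff q j))"
    by (simp add: sum_product emb_poly_sum emb_poly_monom assms mult_monom mult_single distrib_right)
  also have "\<dots> = emb_poly e p * emb_poly e q"
    by (simp add: emb_poly_def sum_product)
  finally show ?thesis .
qed

lemma emb_poly_prod_list: "e \<noteq> 0 \<Longrightarrow> emb_poly e (prod_list ps) = prod_list (map (emb_poly e) ps)"
  by (induction ps) (auto simp: emb_poly_1 emb_poly_mult)

lemma emb_poly_surj:
  assumes "e \<noteq> 0" "Poly_Mapping.keys f \<subseteq> multiples e"
  shows "f \<in> range (emb_poly e)"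
proof -
  define p where
    "p = (\<Sum>k\<in>Poly_Mapping.keys f. monom (Poly_Mapping.lookup f k) (nat \<lfloor>k / e\<rfloor>))"
  have "coeff p j = Poly_Mapping.lookup f (of_nat j * e)" for j
  proof -
    have "coeff p j = (\<Sum>k\<in>Poly_Mapping.keys f.
        if k = of_nat j * e then Poly_Mapping.lookup f k else 0)"
      unfolding p_def coeff_sum
    proof (intro sum.cong refl)
      fix k
      assume "k \<in> Poly_Mapping.keys f"
      then obtain i where "k = of_nat i * e"
        using assms(2) by (auto simp: multiples_def)
      then show "coeff (monom (Poly_Mapping.lookup f k) (nat \<lfloor>k / e\<rfloor>)) j =
          (if k = of_nat j * e then Poly_Mapping.lookup f k else 0)"
        using assms(1) by auto
    qed
    also have "\<dots> = Poly_Mapping.lookup f (of_nat j * e)"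
      by (simp add: in_keys_iff)
    finally show ?thesis .
  qed
  then have "emb_poly e p = f"
    using assms by (intro emb_poly_eqI) (auto simp: in_keys_iff)
  then show ?thesis
    by blast
qed

lemma emb_poly_in_sg_alg: "puiseux_monoid M \<Longrightarrow> e \<in> M \<Longrightarrow> emb_poly e p \<in> sg_alg M"
  using keys_emb_poly puiseux_monoid_multiples by (fastforce simp: sg_alg_def)

section \<open>Units and irreducibles of \<open>F[M]\<close>\<close>

lemma finite_subset_sg_alg_emb_poly:
  assumes M: "puiseux_monoid M" "root_closed M" and "m \<in> M" "m > 0"
    and "finite A" "A \<subseteq> sg_alg M"
  shows "\<exists>e\<in>M. e > 0 \<and> A \<subseteq> range (emb_poly e)"
proof -
  have "finite (\<Union>f\<in>A. Poly_Mapping.keys f)" "(\<Union>f\<in>A. Poly_Mapping.keys f) \<subseteq> M"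
    using assms(5,6) by (auto simp: sg_alg_def)
  then obtain e where "e \<in> M" "e > 0" "(\<Union>f\<in>A. Poly_Mapping.keys f) \<subseteq> multiples e"
    using root_closed_finite_subset_multiples[OF M \<open>m \<in> M\<close> \<open>m > 0\<close>] by blast
  then show ?thesis
    using emb_poly_surj[of e] by (metis UN_subset_iff less_irrefl subsetI)
qed

lemma sg_unit_single:
  assumes "puiseux_monoid M" "c \<noteq> 0"
  shows "sg_unit M (Poly_Mapping.single 0 c :: rat \<Rightarrow>\<^sub>0 'a::field)"
proof -
  have "Poly_Mapping.single 0 d \<in> sg_alg M" for d :: 'a
    using assms(1) by (simp add: sg_alg_def puiseux_monoid_def)
  moreover have "Poly_Mapping.single 0 c * Poly_Mapping.single 0 (inverse c) = (1 :: rat \<Rightarrow>\<^sub>0 'a)"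
    using assms(2) by (simp add: mult_single)
  ultimately show ?thesis
    unfolding sg_unit_def by blast
qed

lemma sg_unit_imp_single:
  assumes M: "puiseux_monoid M" "root_closed M" and "m \<in> M" "m > 0"
    and "sg_unit M (u :: rat \<Rightarrow>\<^sub>0 'a::field)"
  shows "\<exists>c. c \<noteq> 0 \<and> u = Poly_Mapping.single 0 c"
proof -
  obtain v where "v \<in> sg_alg M" "u \<in> sg_alg M" "u * v = 1"
    using assms(5) by (auto simp: sg_unit_def)
  then obtain e where "e > 0" "{u, v} \<subseteq> range (emb_poly e)"
    using finite_subset_sg_alg_emb_poly[OF M \<open>m \<in> M\<close> \<open>m > 0\<close>, of "{u, v}"] by auto
  then obtain a b where ab: "u = emb_poly e a" "v = emb_poly e b"
    by auto
  with \<open>u * v = 1\<close> \<open>e > 0\<close> have "emb_poly e (a * b) = emb_poly e 1"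
    by (simp add: emb_poly_mult emb_poly_1)
  then have "a * b = 1"
    by (rule emb_poly_inj[rotated]) (use \<open>e > 0\<close> in simp)
  then have "is_unit a"
    by (metis dvdI)
  then obtain c where "a = [:c:]" "c \<noteq> 0"
    by (auto simp: is_unit_poly_iff dvd_field_iff)
  then show ?thesis
    using ab \<open>e > 0\<close> by (auto simp: emb_poly_const)
qed

lemma irreducible_if_sg_irreducible_emb_poly:
  assumes M: "puiseux_monoid M" "root_closed M" and "e \<in> M" "e > 0"
    and irr: "sg_irreducible M (emb_poly e q :: rat \<Rightarrow>\<^sub>0 'a::field)"
  shows "irreducible q"
proof (rule irreducibleI)
  have unit_iff: "sg_unit M (emb_poly e p) \<longleftrightarrow> is_unit p" for p :: "'a poly"
  proof
    assume "sg_unit M (emb_poly e p)"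
    then obtain c where "c \<noteq> 0" "emb_poly e p = emb_poly e [:c:]"
      using sg_unit_imp_single[OF M \<open>e \<in> M\<close> \<open>e > 0\<close>] \<open>e > 0\<close> by (metis emb_poly_const less_irrefl)
    moreover from this have "p = [:c:]"
      by (intro emb_poly_inj[of e]) (use \<open>e > 0\<close> in auto)
    ultimately show "is_unit p"
      by (simp add: is_unit_poly_iff dvd_field_iff)
  next
    assume "is_unit p"
    then obtain c where "p = [:c:]" "c \<noteq> 0"
      by (auto simp: is_unit_poly_iff dvd_field_iff)
    then show "sg_unit M (emb_poly e p)"
      using sg_unit_single[OF M(1)] \<open>e > 0\<close> by (simp add: emb_poly_const)
  qed
  show "q \<noteq> 0"
    using irr by (auto simp: sg_irreducible_def)
  show "\<not> is_unit q"
    using irr unit_iff by (simp add: sg_irreducible_def)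
  fix a b
  assume "q = a * b"
  then have "emb_poly e q = emb_poly e a * emb_poly e b"
    using \<open>e > 0\<close> by (simp add: emb_poly_mult)
  then show "is_unit a \<or> is_unit b"
    using irr emb_poly_in_sg_alg[OF M(1) \<open>e \<in> M\<close>] unit_iff unfolding sg_irreducible_def by blast
qed

text \<open>If \<open>M\<close> has no positive element then \<open>F[M] = F\<close> is a field.\<close>

lemma sg_irreducible_imp_pos:
  assumes "puiseux_monoid M" "sg_irreducible M (g :: rat \<Rightarrow>\<^sub>0 'a::field)"
  shows "\<exists>m\<in>M. m > 0"
proof (rule ccontr)
  assume "\<not> (\<exists>m\<in>M. m > 0)"
  then have "Poly_Mapping.keys g \<subseteq> {0}"
    using assms by (force simp: puiseux_monoid_def sg_irreducible_def sg_alg_def)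
  then have "g = Poly_Mapping.single 0 (Poly_Mapping.lookup g 0)"
    by (intro poly_mapping_eqI) (auto simp: lookup_single when_def in_keys_iff)
  moreover have "Poly_Mapping.lookup g 0 \<noteq> 0"
    using assms(2) calculation by (metis sg_irreducible_def single_zero)
  ultimately have "sg_unit M g"
    using sg_unit_single[OF assms(1)] by metis
  then show False
    using assms(2) by (simp add: sg_irreducible_def)
qed

lemma sg_associated_emb_poly:
  assumes "puiseux_monoid M" "e \<in> M" "e \<noteq> 0" "c \<noteq> 0"
  shows "sg_associated M (emb_poly e p) (emb_poly e ([:c:] * p))"
proof -
  have "emb_poly e ([:c:] * p) = Poly_Mapping.single 0 c * emb_poly e p"
    using emb_poly_mult[OF assms(3), of "[:c:]"] emb_poly_const[OF assms(3)] by metis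
  then show ?thesis
    using assms sg_unit_single[of M c] emb_poly_in_sg_alg unfolding sg_associated_def by metis
qed

theorem mainTheorem17:
  fixes M :: "rat set" and gs hs :: "(rat \<Rightarrow>\<^sub>0 'a::field) list"
  assumes "puiseux_monoid M" and "root_closed M"
    and "\<forall>g\<in>set gs. sg_irreducible M g"
    and "\<forall>h\<in>set hs. sg_irreducible M h"
    and "prod_list gs = prod_list hs"
  shows "length gs = length hs \<and>
    (\<exists>\<sigma>. \<sigma> permutes {..<length gs} \<and>
         (\<forall>i<length gs. sg_associated M (gs ! i) (hs ! \<sigma> i)))"
proof (cases "\<exists>m\<in>M. m > 0")
  case False
  then have "\<not> sg_irreducible M g" for g :: "rat \<Rightarrow>\<^sub>0 'a"
    using sg_irreducible_imp_pos[OF assms(1)] by blast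
  then have "gs = []" "hs = []"
    using assms(3,4) by (auto simp: neq_Nil_conv)
  then show ?thesis
    by (auto intro: permutes_id)
next
  case True
  have "finite (set gs \<union> set hs)" "set gs \<union> set hs \<subseteq> sg_alg M"
    using assms(3,4) by (auto simp: sg_irreducible_def)
  then obtain e where e: "e \<in> M" "e > 0" "set gs \<union> set hs \<subseteq> range (emb_poly e)"
    using True finite_subset_sg_alg_emb_poly[OF assms(1,2)] by blast
  then have "\<exists>G. gs = map (emb_poly e) G" "\<exists>H. hs = map (emb_poly e) H"
    unfolding ex_map_conv by auto
  then obtain G H where gs: "gs = map (emb_poly e) G" and hs: "hs = map (emb_poly e) H"
    by blast
  have "\<forall>g\<in>set G. irreducible g" "\<forall>h\<in>set H. irreducible h"
    using assms(3,4) irreducible_if_sg_irreducible_emb_poly[OF assms(1,2) e(1,2)] by (auto simp: gs hs)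
  moreover have "prod_list G = prod_list H"
    using assms(5) e(2) by (intro emb_poly_inj[of e]) (simp_all add: gs hs emb_poly_prod_list)
  ultimately obtain \<sigma> where len: "length G = length H" and \<sigma>: "\<sigma> permutes {..<length G}"
    and assoc: "\<forall>i<length G. \<exists>c. c \<noteq> 0 \<and> H ! \<sigma> i = [:c:] * G ! i"
    using field_poly_factorization_unique by blast
  have "sg_associated M (gs ! i) (hs ! \<sigma> i)" if i: "i < length gs" for i
  proof -
    obtain c where "c \<noteq> 0" and c: "H ! \<sigma> i = [:c:] * G ! i"
      using assoc i gs by auto
    moreover have "\<sigma> i < length H"
      using permutes_in_image[OF \<sigma>] i len gs by simp
    ultimately show ?thesis
      using sg_associated_emb_poly[OF assms(1) e(1), of c "G ! i"] e(2) i
      by (simp add: gs hs c del: mult_pCons_left)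
  qed
  then show ?thesis
    using len \<sigma> by (auto simp: gs hs)
qed

end
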